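(* $\mathcal{OBLOT}^{F}_{\mathcal{L.V.}} > \mathcal{OBLOT}^{S}_{\mathcal{L.V.}}$, i.e. under limited visibility the model $\mathcal{OBLOT}$ under the fully synchronous scheduler is computationally more powerful than under the semi-synchronous scheduler.
   Context: Robots are anonymous, identical, autonomous computational entities viewed as points moving in the Euclidean plane. Each has its own local coordinate system, with no agreement between robots and no common chirality, and perceives itself at its origin. Robots operate in Look-Compute-Move cycles. In Look a robot takes an instantaneous snapshot of the positions of the robots it can see. In Compute it runs the common algorithm on the snapshot to obtain a destination. In Move it moves there. Model $\mathcal{OBLOT}$: robots are oblivious (no memory of previous cycles) and silent (no means of communication). Schedulers: time is divided into rounds. Under the semi-synchronous scheduler $S$ (SSYNCH), in each round an adversarially chosen set of robots is activated and they perform one full cycle in perfect synchronization; every robot is activated infinitely often. Under the fully synchronous scheduler $F$ (FSYNCH), every robot is activated in every round. Limited visibility $\mathcal{L.V.}$: a robot sees only robots within a fixed distance $V_r$ (same for all robots) of its current position, and the initial visibility graph (robots adjacent iff they see each other) is connected. Relations: $\mathcal{M}^X_V$ denotes model $\mathcal{M}$ under scheduler $X$ with visibility $V$. $Task(\mathcal{M},X,V;R)$ is the set of problems solvable by team $R$ in that setting, and $\mathcal{R}$ is the set of all teams. $\mathcal{M}^{X_1}_{V_1} > \mathcal{N}^{X_2}_{V_2}$ means that for all $R\in\mathcal{R}$, $Task(\mathcal{M},X_1,V_1;R)\supseteq Task(\mathcal{N},X_2,V_2;R)$, and for some $R$ the difference $Task(\mathcal{M},X_1,V_1;R)\setminus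 Task(\mathcal{N},X_2,V_2;R)$ is nonempty. *)

theory Defs
  imports Complex_Main
begin

text \<open>Robots move in the Euclidean plane, modelled as the complex numbers.
  Robots of a team of size n are indexed by 0..<n.  A configuration gives the
  position of every robot.\<close>

type_synonym point = complex
type_synonym config = "nat \<Rightarrow> point"
type_synonym execution = "nat \<Rightarrow> config"

text \<open>A local coordinate system (up to the translation putting the robot at its
  own origin) is an arbitrary similarity: a nonzero complex factor (rotation and
  scaling) and a flag telling whether the handedness (chirality) is reversed.\<close>

type_synonym frame = "complex \<times> bool"

definition to_local :: "frame \<Rightarrow> point \<Rightarrow> point" where
  "to_local fr w = (if snd fr then fst fr * cnj w else fst fr * w)"

definition from_local :: "frame \<Rightarrow> point \<Rightarrow> point" where
  "from_local fr d = (if snd fr then cnj (d / fst fr) else d / fst fr)"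

record team =
  nrob :: nat
  vis :: real
  frames :: "nat \<Rightarrow> frame"
  init :: config

definition sees :: "team \<Rightarrow> config \<Rightarrow> nat \<Rightarrow> nat \<Rightarrow> bool" where
  "sees R C i j \<longleftrightarrow> i < nrob R \<and> j < nrob R \<and> dist (C i) (C j) \<le> vis R"

definition valid_team :: "team \<Rightarrow> bool" where
  "valid_team R \<longleftrightarrow> nrob R \<ge> 1 \<and> vis R > 0 \<and>
     (\<forall>i < nrob R. fst (frames R i) \<noteq> 0) \<and>
     (\<forall>i < nrob R. \<forall>j < nrob R. (sees R (init R))\<^sup>*\<^sup>* i j)"

text \<open>Oblivious, silent, anonymous, identical robots: the common algorithm maps
  the snapshot (the set of visible robot positions, in the robot's local
  coordinates, the robot itself being at the origin) to a destination in local
  coordinates.\<close>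

type_synonym algorithm = "point set \<Rightarrow> point"

definition snapshot :: "team \<Rightarrow> config \<Rightarrow> nat \<Rightarrow> point set" where
  "snapshot R C i = {to_local (frames R i) (C j - C i) | j. sees R C i j}"

definition destination :: "team \<Rightarrow> algorithm \<Rightarrow> config \<Rightarrow> nat \<Rightarrow> point" where
  "destination R A C i = C i + from_local (frames R i) (A (snapshot R C i))"

text \<open>Execution under a sequence of activation sets (one per round); activated
  robots perform a full Look-Compute-Move cycle synchronously within the round
  and reach their destination (rigid moves).\<close>

fun exec :: "team \<Rightarrow> algorithm \<Rightarrow> (nat \<Rightarrow> nat set) \<Rightarrow> execution" where
  "exec R A act 0 = init R"
| "exec R A act (Suc t) =
     (\<lambda>i. if i \<in> act t \<and> i < nrob R then destination R A (exec R A act t) i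
          else exec R A act t i)"

type_synonym scheduler = "team \<Rightarrow> (nat \<Rightarrow> nat set) \<Rightarrow> bool"

definition FSYNC :: scheduler where
  "FSYNC R act \<longleftrightarrow> (\<forall>t. act t = {..<nrob R})"

definition SSYNC :: scheduler where
  "SSYNC R act \<longleftrightarrow> (\<forall>t. act t \<subseteq> {..<nrob R} \<and> act t \<noteq> {}) \<and>
     (\<forall>i < nrob R. \<forall>t. \<exists>t' \<ge> t. i \<in> act t')"

text \<open>Problems are temporal geometric predicates on executions; they depend on the
  sequence of configurations but not on the timing (invariance under stuttering).\<close>

definition stutter_equiv :: "execution \<Rightarrow> execution \<Rightarrow> bool" where
  "stutter_equiv e e' \<longleftrightarrow> (\<exists>(c :: execution) (f :: nat \<Rightarrow> nat) g. mono f \<and> surj f \<and> mono g \<and> surj g \<and>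
       e = c \<circ> f \<and> e' = c \<circ> g)"

definition problem :: "(execution \<Rightarrow> bool) \<Rightarrow> bool" where
  "problem P \<longleftrightarrow> (\<forall>x y. stutter_equiv x y \<longrightarrow> (P x \<longleftrightarrow> P y))"

definition solves :: "team \<Rightarrow> scheduler \<Rightarrow> algorithm \<Rightarrow> (execution \<Rightarrow> bool) \<Rightarrow> bool" where
  "solves R X A P \<longleftrightarrow> (\<forall>act. X R act \<longrightarrow> P (exec R A act))"

definition Task :: "scheduler \<Rightarrow> team \<Rightarrow> (execution \<Rightarrow> bool) set" where
  "Task X R = {P. problem P \<and> (\<exists>A. solves R X A P)}"

definition more_powerful :: "scheduler \<Rightarrow> scheduler \<Rightarrow> bool" where
  "more_powerful X1 X2 \<longleftrightarrow>
     (\<forall>R. valid_team R \<longrightarrow> Task X2 R \<subseteq> Task X1 R) \<and>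
     (\<exists>R. valid_team R \<and> Task X1 R - Task X2 R \<noteq> {})"

end

theory Submission
  imports Defs
begin

text \<open>Every fully synchronous schedule is a semi-synchronous one, which gives the inclusion of
  task sets.  For strictness, take two robots at 0 and 1 whose frames differ by a half-turn, and
  the problem "stay point-symmetric about 1/2 and let robot 0 move at some point".
  Under FSYNC the algorithm "step one unit forward" moves both robots in lockstep towards each
  other, preserving the symmetry.  Under SSYNC the adversary activates the robots alternately;
  then in every round only one robot moves, so any algorithm that preserves the symmetry can
  never move robot 0.\<close>

lemma FSYNC_imp_SSYNC: "nrob R > 0 \<Longrightarrow> FSYNC R act \<Longrightarrow> SSYNC R act"
  unfolding FSYNC_def SSYNC_def by blast

lemma Task_SSYNC_subset_Task_FSYNC: "nrob R > 0 \<Longrightarrow> Task SSYNC R \<subseteq> Task FSYNC R"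
  unfolding Task_def solves_def using FSYNC_imp_SSYNC by blast

lemma problem_of_range: "problem (\<lambda>e. Q (range e))"
  unfolding problem_def stutter_equiv_def by (metis image_comp)

lemma exec_Suc_inactive: "i \<notin> act t \<Longrightarrow> exec R A act (Suc t) i = exec R A act t i"
  by simp

definition mirror_team :: team where
  "mirror_team = \<lparr>nrob = 2, vis = 1,
     frames = (\<lambda>i. if i = 0 then (1, False) else (-1, False)),
     init = (\<lambda>i. if i = 0 then 0 else 1)\<rparr>"

definition move_symmetrically :: "execution \<Rightarrow> bool" where
  "move_symmetrically e \<longleftrightarrow> (\<forall>C\<in>range e. C 0 + C 1 = 1) \<and> (\<exists>C\<in>range e. C 0 \<noteq> 0)"

lemma problem_move_symmetrically: "problem move_symmetrically"
  using problem_of_range[of "\<lambda>S. (\<forall>C\<in>S. C 0 + C 1 = 1) \<and> (\<exists>C\<in>S. C 0 \<noteq> 0)"]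
  by (simp add: move_symmetrically_def[abs_def])

lemma valid_mirror_team: "valid_team mirror_team"
  unfolding valid_team_def
proof (intro conjI allI impI)
  fix i j assume "i < nrob mirror_team" "j < nrob mirror_team"
  then have "i < 2" "j < 2" by (auto simp: mirror_team_def)
  moreover have "sees mirror_team (init mirror_team) i j" if "i < 2" "j < 2" for i j
    using that by (auto simp: sees_def mirror_team_def dist_norm less_2_cases_iff)
  ultimately show "(sees mirror_team (init mirror_team))\<^sup>*\<^sup>* i j" by blast
qed (auto simp: mirror_team_def)

definition step_forward :: algorithm where
  "step_forward S = 1"

lemma exec_FSYNC_step_forward:
  assumes "FSYNC mirror_team act"
  shows "exec mirror_team step_forward act t 0 = of_nat t"
    and "exec mirror_team step_forward act t 1 = 1 - of_nat t"
proof -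
  have "act t = {..<2}" for t
    using assms by (simp add: FSYNC_def mirror_team_def)
  then have "exec mirror_team step_forward act t 0 = of_nat t \<and>
      exec mirror_team step_forward act t 1 = 1 - of_nat t"
    by (induction t)
       (simp_all add: destination_def from_local_def step_forward_def mirror_team_def)
  then show "exec mirror_team step_forward act t 0 = of_nat t"
      and "exec mirror_team step_forward act t 1 = 1 - of_nat t"
    by simp_all
qed

lemma solves_FSYNC_move_symmetrically:
  "solves mirror_team FSYNC step_forward move_symmetrically"
  unfolding solves_def move_symmetrically_def
proof (intro allI impI conjI)
  fix act assume "FSYNC mirror_team act"
  note positions = exec_FSYNC_step_forward[OF this]
  show "\<forall>C\<in>range (exec mirror_team step_forward act). C 0 + C 1 = 1"
    using positions by auto
  show "\<exists>C\<in>range (exec mirror_team step_forward act). C 0 \<noteq> 0"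
    by (metis positions(1) of_nat_1 one_neq_zero rangeI)
qed

definition alternating :: "nat \<Rightarrow> nat set" where
  "alternating t = {t mod 2}"

lemma SSYNC_alternating: "SSYNC mirror_team alternating"
  unfolding SSYNC_def alternating_def
proof (intro conjI allI impI)
  fix i t assume "i < nrob mirror_team"
  then have "i < 2" by (simp add: mirror_team_def)
  then show "\<exists>t'\<ge>t. i \<in> {t' mod 2}"
    by (intro exI[of _ "2 * t + i"]) auto
qed (auto simp: mirror_team_def)

lemma not_move_symmetrically_alternating:
  "\<not> move_symmetrically (exec mirror_team A alternating)"
proof
  let ?e = "exec mirror_team A alternating"
  assume sol: "move_symmetrically ?e"
  then have sum: "?e t 0 + ?e t 1 = 1" for t
    unfolding move_symmetrically_def by blast
  have "?e t 0 = 0" for t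
  proof (induction t)
    case 0
    show ?case by (simp add: mirror_team_def)
  next
    case (Suc t)
    show ?case
    proof (cases "t mod 2 = 0")
      case True
      then have "?e (Suc t) 1 = ?e t 1"
        by (intro exec_Suc_inactive) (simp add: alternating_def)
      then show ?thesis using sum[of t] sum[of "Suc t"] Suc by simp
    next
      case False
      then show ?thesis using Suc by (simp add: alternating_def)
    qed
  qed
  then show False using sol unfolding move_symmetrically_def by auto
qed

theorem theorem14:
  shows "more_powerful FSYNC SSYNC"
  unfolding more_powerful_def
proof (intro conjI allI impI)
  fix R assume "valid_team R"
  then show "Task SSYNC R \<subseteq> Task FSYNC R"
    by (intro Task_SSYNC_subset_Task_FSYNC) (simp add: valid_team_def)
next
  have "move_symmetrically \<in> Task FSYNC mirror_team"
    unfolding Task_def using problem_move_symmetrically solves_FSYNC_move_symmetrically by blast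
  moreover have "move_symmetrically \<notin> Task SSYNC mirror_team"
    unfolding Task_def solves_def
    using SSYNC_alternating not_move_symmetrically_alternating by blast
  ultimately show "\<exists>R. valid_team R \<and> Task FSYNC R - Task SSYNC R \<noteq> {}"
    using valid_mirror_team by blast
qed

end
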